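(* For every fixed $0<\beta\leq 1$ there exists a constant $c_\beta$ such that the following holds. For every $0<\alpha<1$ and every dimension $d\geq 1$, if $L=[-1,-\beta]\cup\{\alpha\}$, then $N_L(d)\leq c_\beta\, d$; that is, every $L$-spherical code in $\mathbb{R}^d$ has at most $c_\beta d$ elements.
   Context: For a set $L\subseteq[-1,1]$, an $L$-spherical code in $\mathbb{R}^d$ is a set $P$ of unit vectors in $\mathbb{R}^d$ such that $\langle v,v'\rangle\in L$ for every pair of distinct $v,v'\in P$. $N_L(d)$ denotes the maximum cardinality of an $L$-spherical code in $\mathbb{R}^d$. *)

theory Defs
  imports "HOL-Analysis.Analysis"
begin

text \<open>Vectors of R^d are represented as functions nat => real vanishing outside {..<d}.\<close>

definition vec_space :: "nat \<Rightarrow> (nat \<Rightarrow> real) set" where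
  "vec_space d = {v. \<forall>i\<ge>d. v i = 0}"

definition ip :: "nat \<Rightarrow> (nat \<Rightarrow> real) \<Rightarrow> (nat \<Rightarrow> real) \<Rightarrow> real" where
  "ip d v w = (\<Sum>i<d. v i * w i)"

definition spherical_code :: "real set \<Rightarrow> nat \<Rightarrow> (nat \<Rightarrow> real) set \<Rightarrow> bool" where
  "spherical_code L d P \<longleftrightarrow>
     P \<subseteq> vec_space d \<and> (\<forall>v\<in>P. ip d v v = 1) \<and>
     (\<forall>v\<in>P. \<forall>w\<in>P. v \<noteq> w \<longrightarrow> ip d v w \<in> L)"

end

theory Submission
  imports Defs
begin

text \<open>We bound codes with \<open>L = (-\<infinity>, -\<beta>] \<union> {\<alpha>}\<close> by induction on the number of steps
  \<open>1/\<alpha> \<mapsto> 1/\<alpha> + 1\<close> needed to reach \<open>1/\<alpha> \<ge> 2/\<beta>\<^sup>2\<close>. In that regime positivity of the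
  Gram matrix bounds the number of obtuse neighbours of each vector by \<open>2/\<beta>\<^sup>2\<close>; a greedy
  colouring splits the code into \<open>2/\<beta>\<^sup>2 + 1\<close> equiangular sets, each of size at most
  \<open>d + 1\<close> by a rank argument. Otherwise a maximal pairwise obtuse subset \<open>K\<close> has at most
  \<open>1 + 1/\<beta>\<close> elements and every other vector is an \<open>\<alpha>\<close>-neighbour of some \<open>u \<in> K\<close>;
  projecting the \<open>\<alpha>\<close>-neighbours of \<open>u\<close> onto \<open>u\<^sup>\<bottom>\<close> gives a code with parameter
  \<open>\<alpha>/(1 + \<alpha>)\<close>. Using \<open>(-\<infinity>, -\<beta>]\<close> instead of \<open>[-1, -\<beta>]\<close> makes this class of codes
  closed under projection without appeal to Cauchy--Schwarz.\<close>

lemma ip_sym: "ip d v w = ip d w v"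
  unfolding ip_def by (simp add: mult.commute)

lemma ip_diff: "ip d (\<lambda>i. a i - b i) (\<lambda>i. c i - e i) = ip d a c - ip d a e - ip d b c + ip d b e"
  unfolding ip_def by (simp add: left_diff_distrib right_diff_distrib sum_subtractf sum.distrib)

lemma ip_mean: "ip d a (\<lambda>i. (\<Sum>s\<in>S. s i) / k) = (\<Sum>s\<in>S. ip d a s) / k"
proof -
  have "ip d a (\<lambda>i. (\<Sum>s\<in>S. s i) / k) = (\<Sum>i<d. \<Sum>s\<in>S. a i * s i) / k"
    unfolding ip_def by (simp add: sum_distrib_left sum_divide_distrib)
  also have "\<dots> = (\<Sum>s\<in>S. ip d a s) / k"
    unfolding ip_def by (subst sum.swap) simp
  finally show ?thesis .
qed

lemma ip_scaled_diff:
  "ip d (\<lambda>i. (a i - t * u i) / r) (\<lambda>i. (b i - t * u i) / r)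
     = (ip d a b - t * ip d a u - t * ip d u b + t\<^sup>2 * ip d u u) / r\<^sup>2"
proof -
  have "ip d (\<lambda>i. (a i - t * u i) / r) (\<lambda>i. (b i - t * u i) / r)
      = (\<Sum>i<d. (a i * b i - t * (a i * u i) - t * (u i * b i) + t\<^sup>2 * (u i * u i)) / r\<^sup>2)"
    unfolding ip_def by (rule sum.cong) (auto simp: field_simps power2_eq_square)
  also have "\<dots> = (ip d a b - t * ip d a u - t * ip d u b + t\<^sup>2 * ip d u u) / r\<^sup>2"
    unfolding ip_def sum_divide_distrib[symmetric]
    by (simp add: sum.distrib sum_subtractf sum_distrib_left)
  finally show ?thesis .
qed

lemma gram_form_nonneg:
  assumes "finite S"
  shows "0 \<le> (\<Sum>x\<in>S. \<Sum>y\<in>S. c x * c y * ip d x y)"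
proof -
  have "(\<Sum>x\<in>S. \<Sum>y\<in>S. c x * c y * ip d x y) = (\<Sum>x\<in>S. \<Sum>y\<in>S. \<Sum>i<d. (c x * x i) * (c y * y i))"
    unfolding ip_def by (simp add: sum_distrib_left algebra_simps)
  also have "\<dots> = (\<Sum>i<d. \<Sum>x\<in>S. \<Sum>y\<in>S. (c x * x i) * (c y * y i))"
    by (simp only: sum.swap[of _ S "{..<d}"])
  also have "\<dots> = (\<Sum>i<d. (\<Sum>x\<in>S. c x * x i)\<^sup>2)"
    by (simp add: power2_eq_square sum_product)
  finally show ?thesis by (simp add: sum_nonneg)
qed

text \<open>The Gram matrix of vectors in \<open>\<real>\<^sup>d\<close> has rank at most \<open>d\<close>; in the form
  \<open>(tr G)\<^sup>2 \<le> d \<cdot> tr (G\<^sup>2)\<close> this is Cauchy--Schwarz applied to the diagonal of the frame operator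
  \<open>F = \<Sum>\<^sub>v x\<^sub>v x\<^sub>v\<^sup>T\<close>, which satisfies \<open>tr F = tr G\<close> and \<open>tr (F\<^sup>2) = tr (G\<^sup>2)\<close>.\<close>

lemma gram_trace_sq_le:
  assumes "finite S"
  shows "(\<Sum>v\<in>S. ip d (x v) (x v))\<^sup>2 \<le> real d * (\<Sum>v\<in>S. \<Sum>w\<in>S. (ip d (x v) (x w))\<^sup>2)"
proof -
  define F where "F k l = (\<Sum>v\<in>S. x v k * x v l)" for k l
  have trace: "(\<Sum>v\<in>S. ip d (x v) (x v)) = (\<Sum>k<d. F k k)"
    unfolding ip_def F_def by (rule sum.swap)
  have sq: "(\<Sum>k<d. a k * b k)\<^sup>2 = (\<Sum>k<d. \<Sum>l<d. (a k * a l) * (b k * b l))" for a b :: "nat \<Rightarrow> real"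
    unfolding power2_eq_square sum_product by (simp add: algebra_simps)
  have "(\<Sum>v\<in>S. \<Sum>w\<in>S. (ip d (x v) (x w))\<^sup>2)
        = (\<Sum>v\<in>S. \<Sum>w\<in>S. \<Sum>k<d. \<Sum>l<d. (x v k * x v l) * (x w k * x w l))"
    unfolding ip_def sq ..
  also have "\<dots> = (\<Sum>k<d. \<Sum>l<d. \<Sum>v\<in>S. \<Sum>w\<in>S. (x v k * x v l) * (x w k * x w l))"
    by (simp only: sum.swap[of _ S "{..<d}"])
  also have "\<dots> = (\<Sum>k<d. \<Sum>l<d. (F k l)\<^sup>2)"
    unfolding F_def power2_eq_square sum_product ..
  finally have frobenius: "(\<Sum>v\<in>S. \<Sum>w\<in>S. (ip d (x v) (x w))\<^sup>2) = (\<Sum>k<d. \<Sum>l<d. (F k l)\<^sup>2)" .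
  have diagonal: "(\<Sum>k<d. (F k k)\<^sup>2) \<le> (\<Sum>k<d. \<Sum>l<d. (F k l)\<^sup>2)"
    by (intro sum_mono member_le_sum) auto
  have "(\<Sum>k<d. F k k)\<^sup>2 \<le> real d * (\<Sum>k<d. (F k k)\<^sup>2)"
    using sum_squared_le_sum_of_squares[of "\<lambda>k. F k k" "{..<d}"] by (simp add: mult.commute)
  also have "\<dots> \<le> real d * (\<Sum>k<d. \<Sum>l<d. (F k l)\<^sup>2)"
    using diagonal by (rule mult_left_mono) simp
  finally show ?thesis unfolding trace frobenius .
qed

lemma sum_le_point_plus_rest:
  fixes f :: "'a \<Rightarrow> real"
  assumes "finite T" "v \<in> T" "f v \<le> a" "\<And>w. w \<in> T \<Longrightarrow> w \<noteq> v \<Longrightarrow> f w \<le> b"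
  shows "(\<Sum>w\<in>T. f w) \<le> a + (real (card T) - 1) * b"
proof -
  have "(\<Sum>w\<in>T. f w) = f v + (\<Sum>w\<in>T-{v}. f w)" using assms by (simp add: sum.remove)
  also have "(\<Sum>w\<in>T-{v}. f w) \<le> (\<Sum>w\<in>T-{v}. b)" using assms by (intro sum_mono) auto
  also have "(\<Sum>w\<in>T-{v}. b) = (real (card T) - 1) * b"
  proof -
    have "card T \<ge> 1" using assms(1,2) by (auto simp: Suc_le_eq card_gt_0_iff)
    then have "real (card (T - {v})) = real (card T) - 1" using assms(2) by (simp add: card_Diff_singleton)
    then show ?thesis by simp
  qed
  finally show ?thesis using assms(3) by linarith
qed

lemma sum_eq_point_plus_rest:
  fixes f :: "'a \<Rightarrow> real"
  assumes "finite T" "v \<in> T" "f v = a" "\<And>w. w \<in> T \<Longrightarrow> w \<noteq> v \<Longrightarrow> f w = b"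
  shows "(\<Sum>w\<in>T. f w) = a + (real (card T) - 1) * b"
  using sum_le_point_plus_rest[of T v f a b] sum_le_point_plus_rest[of T v "\<lambda>w. - f w" "-a" "-b"] assms
  by (simp add: sum_negf)

lemma spherical_code_subset: "spherical_code L d P \<Longrightarrow> Q \<subseteq> P \<Longrightarrow> spherical_code L d Q"
  unfolding spherical_code_def by (meson order_trans subsetD)

lemma spherical_code_mono: "spherical_code L d P \<Longrightarrow> L \<subseteq> L' \<Longrightarrow> spherical_code L' d P"
  unfolding spherical_code_def by auto

lemma card_obtuse_code_le:
  assumes "finite K" "0 < \<beta>" "spherical_code {..-\<beta>} d K"
  shows "real (card K) \<le> 1 + 1/\<beta>"
proof (cases "K = {}")
  case True then show ?thesis using assms by simp
next
  case False
  define k where "k = real (card K)"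
  have k1: "k \<ge> 1" using False assms(1) unfolding k_def by (simp add: Suc_le_eq card_gt_0_iff)
  have "0 \<le> (\<Sum>x\<in>K. \<Sum>y\<in>K. ip d x y)"
    using gram_form_nonneg[OF assms(1), of "\<lambda>_. 1" d] by simp
  also have "\<dots> \<le> (\<Sum>x\<in>K. 1 + (k - 1) * (-\<beta>))"
  proof (rule sum_mono)
    fix x assume x: "x \<in> K"
    have "ip d x x = 1" "\<And>y. y \<in> K \<Longrightarrow> y \<noteq> x \<Longrightarrow> ip d x y \<le> -\<beta>"
      using assms(3) x unfolding spherical_code_def by auto
    then show "(\<Sum>y\<in>K. ip d x y) \<le> 1 + (k - 1) * (-\<beta>)"
      unfolding k_def by (intro sum_le_point_plus_rest[OF assms(1) x]) auto
  qed
  also have "\<dots> = k * (1 - (k - 1) * \<beta>)" by (simp add: k_def)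
  finally have "0 \<le> 1 - (k - 1) * \<beta>" using k1 by (simp add: zero_le_mult_iff)
  then have "k - 1 \<le> 1/\<beta>" using assms(2) by (simp add: pos_le_divide_eq)
  then show ?thesis by (simp add: k_def)
qed

text \<open>Centering at the mean \<open>m\<close> gives vectors with Gram matrix \<open>(1 - \<alpha>) (I - J/k)\<close>, of trace
  \<open>(k - 1)(1 - \<alpha>)\<close> and squared Frobenius norm \<open>(k - 1)(1 - \<alpha>)\<^sup>2\<close>; the rank bound then yields
  \<open>k - 1 \<le> d\<close>.\<close>

lemma card_equiangular_code_le:
  assumes "finite S" "\<alpha> < 1" "spherical_code {\<alpha>} d S"
  shows "real (card S) \<le> real d + 1"
proof (cases "card S \<le> 1")
  case True then show ?thesis by simp
next
  case False
  define k where "k = real (card S)"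
  define q where "q = (1 + (k - 1) * \<alpha>) / k"
  define m where "m = (\<lambda>i. (\<Sum>s\<in>S. s i) / k)"
  define x where "x v = (\<lambda>i. v i - m i)" for v :: "nat \<Rightarrow> real"
  have k2: "k \<ge> 2" using False by (simp add: k_def)
  have unit: "\<And>v. v \<in> S \<Longrightarrow> ip d v v = 1"
    and equi: "\<And>v w. v \<in> S \<Longrightarrow> w \<in> S \<Longrightarrow> v \<noteq> w \<Longrightarrow> ip d v w = \<alpha>"
    using assms(3) by (auto simp: spherical_code_def)
  have vm: "ip d v m = q" if "v \<in> S" for v
  proof -
    have "(\<Sum>s\<in>S. ip d v s) = 1 + (k - 1) * \<alpha>"
      unfolding k_def using assms(1) that unit equi by (intro sum_eq_point_plus_rest) auto
    then show ?thesis unfolding m_def q_def ip_mean by simp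
  qed
  have mm: "ip d m m = q"
  proof -
    have "ip d m m = (\<Sum>s\<in>S. ip d m s) / k" unfolding m_def by (rule ip_mean)
    also have "(\<Sum>s\<in>S. ip d m s) = (\<Sum>s\<in>S. q)" by (rule sum.cong) (auto simp: ip_sym vm)
    finally show ?thesis using k2 by (simp add: k_def)
  qed
  have xx: "ip d (x v) (x w) = ip d v w - q" if "v \<in> S" "w \<in> S" for v w
    unfolding x_def ip_diff using vm[OF that(1)] vm[OF that(2)] mm by (simp add: ip_sym)
  have trace: "(\<Sum>v\<in>S. ip d (x v) (x v)) = (k - 1) * (1 - \<alpha>)"
    using k2 by (simp add: xx unit k_def[symmetric] q_def field_simps)
  have "(\<Sum>v\<in>S. \<Sum>w\<in>S. (ip d (x v) (x w))\<^sup>2) = (\<Sum>v\<in>S. (1 - q)\<^sup>2 + (k - 1) * (\<alpha> - q)\<^sup>2)"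
    unfolding k_def using assms(1) by (intro sum.cong refl sum_eq_point_plus_rest) (auto simp: xx unit equi)
  also have "\<dots> = (k - 1) * (1 - \<alpha>)\<^sup>2"
    using k2 by (simp add: k_def[symmetric] q_def field_simps power2_eq_square)
  finally have "((k - 1) * (1 - \<alpha>))\<^sup>2 \<le> real d * ((k - 1) * (1 - \<alpha>)\<^sup>2)"
    using gram_trace_sq_le[OF assms(1), of d x] trace by simp
  then have "(k - 1) * ((k - 1) * (1 - \<alpha>)\<^sup>2) \<le> real d * ((k - 1) * (1 - \<alpha>)\<^sup>2)"
    by (simp add: power2_eq_square algebra_simps)
  moreover have "(k - 1) * (1 - \<alpha>)\<^sup>2 > 0" using k2 assms(2) by simp
  ultimately show ?thesis using mult_right_le_imp_le by (fastforce simp: k_def)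
qed

text \<open>Positivity of the Gram form at \<open>\<beta> t v + \<Sum>T\<close>, where \<open>t = |T|\<close>, gives
  \<open>0 \<le> \<beta>\<^sup>2t\<^sup>2 - 2\<beta>\<^sup>2t\<^sup>2 + t + t\<^sup>2\<alpha>\<close>.\<close>

lemma card_obtuse_neighbourhood_le:
  assumes "finite T" "0 < \<beta>" "0 \<le> \<alpha>" "\<alpha> \<le> \<beta>\<^sup>2/2" "ip d v v = 1" "spherical_code {..\<alpha>} d T"
    and obtuse: "\<forall>w\<in>T. ip d v w \<le> -\<beta>"
  shows "real (card T) \<le> 2/\<beta>\<^sup>2"
proof -
  define t where "t = real (card T)"
  define c where "c x = (if x = v then \<beta> * t else 1)" for x
  have t0: "t \<ge> 0" by (simp add: t_def)
  have unit: "\<And>w. w \<in> T \<Longrightarrow> ip d w w = 1"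
    and acute: "\<And>w w'. w \<in> T \<Longrightarrow> w' \<in> T \<Longrightarrow> w \<noteq> w' \<Longrightarrow> ip d w w' \<le> \<alpha>"
    using assms(6) by (auto simp: spherical_code_def)
  have vT: "v \<notin> T" using obtuse assms(2,5) by force
  have cT: "\<And>x. x \<in> T \<Longrightarrow> c x = 1" using vT by (auto simp: c_def)
  have sv: "(\<Sum>y\<in>T. ip d v y) \<le> t * (-\<beta>)"
    using sum_bounded_above[of T "ip d v" "-\<beta>"] obtuse by (simp add: t_def)
  have "(\<Sum>x\<in>T. \<Sum>y\<in>T. ip d x y) \<le> (\<Sum>x\<in>T. 1 + (t - 1) * \<alpha>)"
  proof (rule sum_mono)
    fix x assume "x \<in> T"
    then show "(\<Sum>y\<in>T. ip d x y) \<le> 1 + (t - 1) * \<alpha>"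
      unfolding t_def using assms(1) unit acute by (intro sum_le_point_plus_rest) auto
  qed
  also have "\<dots> \<le> t + t * t * \<alpha>"
    using assms(3) t0 by (simp add: t_def[symmetric] algebra_simps)
  finally have sT: "(\<Sum>x\<in>T. \<Sum>y\<in>T. ip d x y) \<le> t + t * t * \<alpha>" .
  define g where "g x y = c x * c y * ip d x y" for x y
  have "(\<Sum>x\<in>insert v T. \<Sum>y\<in>insert v T. g x y)
        = g v v + (\<Sum>y\<in>T. g v y) + (\<Sum>x\<in>T. g x v + (\<Sum>y\<in>T. g x y))"
    using assms(1) vT by (simp add: add.assoc)
  also have "(\<Sum>y\<in>T. g v y) = \<beta> * t * (\<Sum>y\<in>T. ip d v y)"
    by (simp add: g_def sum_distrib_left cT) (simp add: c_def)
  also have "(\<Sum>x\<in>T. g x v + (\<Sum>y\<in>T. g x y))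
             = \<beta> * t * (\<Sum>y\<in>T. ip d v y) + (\<Sum>x\<in>T. \<Sum>y\<in>T. ip d x y)"
    by (simp add: g_def cT sum.distrib sum_distrib_left ip_sym[of d _ v]) (simp add: c_def)
  also have "g v v = \<beta> * \<beta> * t * t" using assms(5) by (simp add: g_def c_def)
  finally have "(\<Sum>x\<in>insert v T. \<Sum>y\<in>insert v T. c x * c y * ip d x y)
        = \<beta> * \<beta> * t * t + 2 * (\<beta> * t) * (\<Sum>y\<in>T. ip d v y) + (\<Sum>x\<in>T. \<Sum>y\<in>T. ip d x y)"
    by (simp add: g_def)
  moreover have "0 \<le> (\<Sum>x\<in>insert v T. \<Sum>y\<in>insert v T. c x * c y * ip d x y)"
    using assms(1) by (intro gram_form_nonneg) simp
  moreover have "\<beta> * t * (\<Sum>y\<in>T. ip d v y) \<le> \<beta> * t * (t * (-\<beta>))"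
    using sv assms(2) t0 by (intro mult_left_mono) auto
  moreover have "t * t * \<alpha> \<le> t * t * (\<beta>\<^sup>2/2)" using assms(4) t0 by (intro mult_left_mono) auto
  ultimately have "0 \<le> t * (1 - t * \<beta>\<^sup>2 / 2)"
    using sT by (simp add: algebra_simps power2_eq_square)
  then have "t = 0 \<or> t * \<beta>\<^sup>2 / 2 \<le> 1" using t0 by (auto simp: zero_le_mult_iff)
  then show ?thesis using assms(2) by (auto simp: t_def field_simps)
qed

lemma bounded_degree_colouring:
  fixes R :: "'a \<Rightarrow> 'a \<Rightarrow> bool"
  assumes "finite P" "\<forall>v\<in>P. card {w\<in>P. R v w} \<le> D" "\<And>v w. R v w \<Longrightarrow> R w v" "\<And>v. \<not> R v v"
  shows "\<exists>f. (\<forall>v\<in>P. f v \<le> D) \<and> (\<forall>v\<in>P. \<forall>w\<in>P. R v w \<longrightarrow> f v \<noteq> f w)"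
  using assms(1,2)
proof (induction P rule: finite_induct)
  case empty then show ?case by auto
next
  case (insert x F)
  have "card {w\<in>F. R v w} \<le> D" if "v \<in> F" for v
    using insert.prems that card_mono[of "{w\<in>insert x F. R v w}" "{w\<in>F. R v w}"] insert.hyps(1)
    by fastforce
  then obtain f where f: "\<forall>v\<in>F. f v \<le> D" "\<forall>v\<in>F. \<forall>w\<in>F. R v w \<longrightarrow> f v \<noteq> f w"
    using insert.IH by blast
  define N where "N = {w\<in>F. R x w}"
  have "card N \<le> card {w\<in>insert x F. R x w}"
    unfolding N_def by (rule card_mono) (use insert.hyps(1) in auto)
  then have "card (f ` N) < card {0..D}"
    using insert.prems card_image_le[of N f] insert.hyps(1) by (force simp: N_def)
  then obtain c where c: "c \<in> {0..D}" "c \<notin> f ` N"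
    using card_mono[of "f ` N" "{0..D}"] insert.hyps(1) by (force simp: N_def)
  have "\<forall>v\<in>insert x F. \<forall>w\<in>insert x F. R v w \<longrightarrow> (f(x := c)) v \<noteq> (f(x := c)) w"
    using f(2) c insert.hyps(2) assms(3,4) by (auto simp: N_def)
  moreover have "\<forall>v\<in>insert x F. (f(x := c)) v \<le> D" using f(1) c by auto
  ultimately show ?case by blast
qed

lemma card_code_le_of_small_alpha:
  assumes "0 < \<beta>" "0 < \<alpha>" "\<alpha> \<le> \<beta>\<^sup>2/2" "\<alpha> < 1" "finite P" "spherical_code ({..-\<beta>} \<union> {\<alpha>}) d P"
  shows "real (card P) \<le> (2/\<beta>\<^sup>2 + 1) * (real d + 1)"
proof -
  define D where "D = nat \<lfloor>2/\<beta>\<^sup>2\<rfloor>"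
  define R where "R v w \<longleftrightarrow> v \<noteq> w \<and> ip d v w \<le> -\<beta>" for v w
  have unit: "\<forall>v\<in>P. ip d v v = 1"
    and dist: "\<forall>v\<in>P. \<forall>w\<in>P. v \<noteq> w \<longrightarrow> ip d v w \<le> -\<beta> \<or> ip d v w = \<alpha>"
    using assms(6) by (auto simp: spherical_code_def)
  have degree: "\<forall>v\<in>P. card {w\<in>P. R v w} \<le> D"
  proof
    fix v assume v: "v \<in> P"
    have "spherical_code ({..-\<beta>} \<union> {\<alpha>}) d {w\<in>P. R v w}"
      using assms(6) by (rule spherical_code_subset) auto
    then have "spherical_code {..\<alpha>} d {w\<in>P. R v w}"
      by (rule spherical_code_mono) (use assms(1,2) in auto)
    then have "real (card {w\<in>P. R v w}) \<le> 2/\<beta>\<^sup>2"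
      using assms(1,2,3,5) unit v
      by (intro card_obtuse_neighbourhood_le[where \<alpha> = \<alpha>]) (auto simp: R_def)
    then show "card {w\<in>P. R v w} \<le> D" unfolding D_def by (simp add: le_nat_floor)
  qed
  have "\<And>v w. R v w \<Longrightarrow> R w v" "\<And>v. \<not> R v v" by (auto simp: R_def ip_sym)
  then obtain f where f: "\<forall>v\<in>P. f v \<le> D" "\<forall>v\<in>P. \<forall>w\<in>P. R v w \<longrightarrow> f v \<noteq> f w"
    using bounded_degree_colouring[OF assms(5) degree] by blast
  have "card P \<le> (\<Sum>c\<in>{0..D}. card {v\<in>P. f v = c})"
  proof -
    have "P = (\<Union>c\<in>{0..D}. {v\<in>P. f v = c})" using f(1) by auto
    also have "card \<dots> \<le> (\<Sum>c\<in>{0..D}. card {v\<in>P. f v = c})" by (rule card_UN_le) simp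
    finally show ?thesis .
  qed
  then have "real (card P) \<le> (\<Sum>c\<in>{0..D}. real (card {v\<in>P. f v = c}))"
    unfolding of_nat_sum[symmetric] of_nat_le_iff .
  also have "\<dots> \<le> (\<Sum>c\<in>{0..D}. real d + 1)"
  proof (rule sum_mono)
    fix c
    have "spherical_code {\<alpha>} d {v\<in>P. f v = c}"
      unfolding spherical_code_def
    proof (intro conjI ballI impI)
      show "{v\<in>P. f v = c} \<subseteq> vec_space d" using assms(6) by (auto simp: spherical_code_def)
    next
      fix v assume "v \<in> {v\<in>P. f v = c}"
      then show "ip d v v = 1" using unit by simp
    next
      fix v w assume "v \<in> {v\<in>P. f v = c}" "w \<in> {v\<in>P. f v = c}" "v \<noteq> w"
      then show "ip d v w \<in> {\<alpha>}" using dist f(2) unfolding R_def by fastforce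
    qed
    then show "real (card {v\<in>P. f v = c}) \<le> real d + 1"
      using assms(4,5) by (intro card_equiangular_code_le) auto
  qed
  also have "\<dots> = (real D + 1) * (real d + 1)" by simp
  also have "\<dots> \<le> (2/\<beta>\<^sup>2 + 1) * (real d + 1)"
    using assms(1) by (intro mult_right_mono) (auto simp: D_def of_nat_floor)
  finally show ?thesis .
qed

text \<open>Projection onto \<open>u\<^sup>\<bottom>\<close> and renormalisation map the inner product \<open>\<gamma>\<close> of two
  \<open>\<alpha>\<close>-neighbours of \<open>u\<close> to \<open>(\<gamma> - \<alpha>\<^sup>2)/(1 - \<alpha>\<^sup>2)\<close>, which sends \<open>\<alpha>\<close> to \<open>\<alpha>/(1 + \<alpha>)\<close>.\<close>

lemma spherical_code_project_neighbours:
  assumes "0 < \<beta>" "0 < \<alpha>" "\<alpha> < 1" "finite P" "spherical_code ({..-\<beta>} \<union> {\<alpha>}) d P" "u \<in> P"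
  shows "\<exists>Q. finite Q \<and> spherical_code ({..-\<beta>} \<union> {\<alpha>/(1+\<alpha>)}) d Q
             \<and> card Q = card {w\<in>P. w \<noteq> u \<and> ip d u w = \<alpha>}"
proof -
  define W where "W = {w\<in>P. w \<noteq> u \<and> ip d u w = \<alpha>}"
  define r where "r = sqrt (1 - \<alpha>\<^sup>2)"
  define \<phi> where "\<phi> w = (\<lambda>i. (w i - \<alpha> * u i) / r)" for w :: "nat \<Rightarrow> real"
  have a2: "\<alpha>\<^sup>2 < 1" using assms(2,3) by (simp add: power_less_one_iff abs_less_iff)
  have r2: "r\<^sup>2 = 1 - \<alpha>\<^sup>2" unfolding r_def using a2 by simp
  have "r \<noteq> 0" using r2 a2 by auto
  have unit: "\<forall>v\<in>P. ip d v v = 1"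
    and dist: "\<forall>v\<in>P. \<forall>w\<in>P. v \<noteq> w \<longrightarrow> ip d v w \<le> -\<beta> \<or> ip d v w = \<alpha>"
    and sub: "P \<subseteq> vec_space d"
    using assms(5) by (auto simp: spherical_code_def)
  have ip_\<phi>: "ip d (\<phi> a) (\<phi> b) = (ip d a b - \<alpha>\<^sup>2) / (1 - \<alpha>\<^sup>2)" if "a \<in> W" "b \<in> W" for a b
  proof -
    have "ip d a u = \<alpha>" "ip d u b = \<alpha>" "ip d u u = 1"
      using that assms(6) unit by (auto simp: W_def ip_sym)
    then show ?thesis unfolding \<phi>_def ip_scaled_diff r2 by (simp add: power2_eq_square)
  qed
  have "inj_on \<phi> W"
  proof (rule inj_onI)
    fix a b assume "\<phi> a = \<phi> b"
    then have "\<And>i. (a i - \<alpha> * u i) / r = (b i - \<alpha> * u i) / r" unfolding \<phi>_def by meson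
    then show "a = b" using \<open>r \<noteq> 0\<close> by (simp add: divide_cancel_right fun_eq_iff)
  qed
  then have "card (\<phi> ` W) = card W" by (rule card_image)
  moreover have "spherical_code ({..-\<beta>} \<union> {\<alpha>/(1+\<alpha>)}) d (\<phi> ` W)"
    unfolding spherical_code_def
  proof (intro conjI ballI impI)
    have "\<phi> a \<in> vec_space d" if "a \<in> P" for a
    proof -
      have "a \<in> vec_space d" "u \<in> vec_space d" using sub that assms(6) by auto
      then show ?thesis by (simp add: vec_space_def \<phi>_def)
    qed
    then show "\<phi> ` W \<subseteq> vec_space d" by (auto simp: W_def)
  next
    fix x assume "x \<in> \<phi> ` W"
    then obtain a where a: "a \<in> W" "x = \<phi> a" by blast
    have "ip d a a = 1" using a unit by (auto simp: W_def)
    then show "ip d x x = 1" using ip_\<phi>[OF a(1) a(1)] a a2 by simp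
  next
    fix x y assume "x \<in> \<phi> ` W" "y \<in> \<phi> ` W" "x \<noteq> y"
    then obtain a b where a: "a \<in> W" "x = \<phi> a" and b: "b \<in> W" "y = \<phi> b" and "a \<noteq> b" by blast
    then have "ip d a b \<le> -\<beta> \<or> ip d a b = \<alpha>" using dist by (auto simp: W_def)
    moreover have "(ip d a b - \<alpha>\<^sup>2) / (1 - \<alpha>\<^sup>2) \<le> -\<beta>" if "ip d a b \<le> -\<beta>"
    proof -
      have "-\<beta> * (1 - \<alpha>\<^sup>2) = -\<beta> + \<beta> * \<alpha>\<^sup>2" by (simp add: algebra_simps)
      moreover have "0 \<le> \<beta> * \<alpha>\<^sup>2" using assms(1) by simp
      ultimately have "ip d a b - \<alpha>\<^sup>2 \<le> -\<beta> * (1 - \<alpha>\<^sup>2)"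
        using that zero_le_power2[of \<alpha>] by linarith
      then show ?thesis using a2 by (simp add: divide_le_eq)
    qed
    moreover have "(\<alpha> - \<alpha>\<^sup>2) / (1 - \<alpha>\<^sup>2) = \<alpha> / (1 + \<alpha>)"
    proof -
      have "(\<alpha> - \<alpha>\<^sup>2) / (1 - \<alpha>\<^sup>2) = (\<alpha> * (1 - \<alpha>)) / ((1 + \<alpha>) * (1 - \<alpha>))"
        by (simp add: power2_eq_square algebra_simps)
      then show ?thesis using assms(3) by simp
    qed
    ultimately show "ip d x y \<in> {..-\<beta>} \<union> {\<alpha>/(1+\<alpha>)}" using ip_\<phi>[OF a(1) b(1)] a b by auto
  qed
  moreover have "finite (\<phi> ` W)" using assms(4) by (simp add: W_def)
  ultimately show ?thesis unfolding W_def by blast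
qed

lemma obtuse_clique_dominating:
  assumes "finite P" "spherical_code ({..-\<beta>} \<union> {\<alpha>}) d P"
  obtains K where "K \<subseteq> P" "spherical_code {..-\<beta>} d K"
    "P \<subseteq> K \<union> (\<Union>u\<in>K. {w\<in>P. w \<noteq> u \<and> ip d u w = \<alpha>})"
proof -
  define Ks where "Ks = {K. K \<subseteq> P \<and> spherical_code {..-\<beta>} d K}"
  have "finite Ks" using assms(1) by (simp add: Ks_def)
  moreover have "{} \<in> Ks" by (simp add: Ks_def spherical_code_def)
  ultimately obtain K where K: "K \<in> Ks" and maximal: "\<And>K'. K' \<in> Ks \<Longrightarrow> K \<subseteq> K' \<Longrightarrow> K = K'"
    using finite_has_maximal[of Ks] by blast
  have KP: "K \<subseteq> P" and obtuse: "spherical_code {..-\<beta>} d K" using K by (auto simp: Ks_def)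
  have "v \<in> K \<union> (\<Union>u\<in>K. {w\<in>P. w \<noteq> u \<and> ip d u w = \<alpha>})" if v: "v \<in> P" for v
  proof (rule ccontr)
    assume uncovered: "v \<notin> K \<union> (\<Union>u\<in>K. {w\<in>P. w \<noteq> u \<and> ip d u w = \<alpha>})"
    have obtuse_v: "ip d u v \<le> -\<beta>" "ip d v u \<le> -\<beta>" if "u \<in> K" for u
    proof -
      have "ip d u v \<in> {..-\<beta>} \<union> {\<alpha>}"
        using assms(2) v KP that uncovered unfolding spherical_code_def by auto
      then show "ip d u v \<le> -\<beta>" using uncovered v that by auto
      then show "ip d v u \<le> -\<beta>" by (simp add: ip_sym)
    qed
    have "insert v K \<in> Ks"
      unfolding Ks_def spherical_code_def
    proof (intro CollectI conjI ballI impI)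
      show "insert v K \<subseteq> P" using v KP by simp
      then show "insert v K \<subseteq> vec_space d" using assms(2) by (auto simp: spherical_code_def)
      show "ip d w w = 1" if "w \<in> insert v K" for w
        using that \<open>insert v K \<subseteq> P\<close> assms(2) by (auto simp: spherical_code_def)
    next
      fix w w' assume "w \<in> insert v K" "w' \<in> insert v K" "w \<noteq> w'"
      then show "ip d w w' \<in> {..-\<beta>}"
        using obtuse obtuse_v by (auto simp: spherical_code_def)
    qed
    moreover have "v \<notin> K" using uncovered by blast
    ultimately show False using maximal by blast
  qed
  then show thesis using that KP obtuse by blast
qed

lemma card_code_le_step:
  assumes "0 < \<beta>" "0 < \<alpha>" "\<alpha> < 1" "finite P" "spherical_code ({..-\<beta>} \<union> {\<alpha>}) d P" "0 \<le> B"
    and projected: "\<And>Q. finite Q \<Longrightarrow> spherical_code ({..-\<beta>} \<union> {\<alpha>/(1+\<alpha>)}) d Q \<Longrightarrow> real (card Q) \<le> B"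
  shows "real (card P) \<le> (1 + 1/\<beta>) * (1 + B)"
proof -
  define W where "W u = {w\<in>P. w \<noteq> u \<and> ip d u w = \<alpha>}" for u
  obtain K where KP: "K \<subseteq> P" and obtuse: "spherical_code {..-\<beta>} d K"
    and cover: "P \<subseteq> K \<union> (\<Union>u\<in>K. W u)"
    using obtuse_clique_dominating[OF assms(4,5)] unfolding W_def by blast
  have fK: "finite K" using KP assms(4) by (rule finite_subset)
  have card_W: "real (card (W u)) \<le> B" if "u \<in> K" for u
  proof -
    have "u \<in> P" using that KP by blast
    then obtain Q where "finite Q" "spherical_code ({..-\<beta>} \<union> {\<alpha>/(1+\<alpha>)}) d Q" "card Q = card (W u)"
      using spherical_code_project_neighbours[OF assms(1-5)] unfolding W_def by blast
    then show ?thesis using projected by metis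
  qed
  have "card P \<le> card (K \<union> (\<Union>u\<in>K. W u))"
    using cover fK assms(4) by (intro card_mono) (auto simp: W_def)
  also have "\<dots> \<le> card K + (\<Sum>u\<in>K. card (W u))"
    using card_Un_le[of K "\<Union>u\<in>K. W u"] card_UN_le[OF fK, of W] by linarith
  finally have "real (card P) \<le> real (card K) + (\<Sum>u\<in>K. real (card (W u)))"
    unfolding of_nat_sum[symmetric] of_nat_add[symmetric] of_nat_le_iff .
  also have "\<dots> \<le> real (card K) + real (card K) * B"
    using sum_mono[of K "\<lambda>u. real (card (W u))" "\<lambda>_. B"] card_W by simp
  also have "\<dots> = real (card K) * (1 + B)" by (simp add: algebra_simps)
  also have "\<dots> \<le> (1 + 1/\<beta>) * (1 + B)"
    using card_obtuse_code_le[OF fK assms(1) obtuse] assms(6) by (intro mult_right_mono) auto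
  finally show ?thesis .
qed

primrec code_bound :: "real \<Rightarrow> nat \<Rightarrow> real" where
  "code_bound \<beta> 0 = 2/\<beta>\<^sup>2 + 1"
| "code_bound \<beta> (Suc n) = (1 + 1/\<beta>) * (1 + code_bound \<beta> n)"

lemma code_bound_nonneg: "0 < \<beta> \<Longrightarrow> 0 \<le> code_bound \<beta> n"
  by (induction n) simp_all

lemma card_code_le_code_bound:
  assumes "0 < \<beta>" "0 < \<alpha>" "\<alpha> < 1" "2/\<beta>\<^sup>2 \<le> 1/\<alpha> + real n"
    "finite P" "spherical_code ({..-\<beta>} \<union> {\<alpha>}) d P"
  shows "real (card P) \<le> code_bound \<beta> n * (real d + 1)"
  using assms(2-)
proof (induction n arbitrary: \<alpha> P)
  case 0
  then have "\<alpha> \<le> \<beta>\<^sup>2/2" using assms(1) by (simp add: field_simps)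
  then show ?case using card_code_le_of_small_alpha[OF assms(1)] 0 by simp
next
  case (Suc n)
  have "1/(\<alpha>/(1+\<alpha>)) = 1/\<alpha> + 1" using Suc.prems(1) by (simp add: field_simps)
  then have "real (card Q) \<le> code_bound \<beta> n * (real d + 1)"
    if "finite Q" "spherical_code ({..-\<beta>} \<union> {\<alpha>/(1+\<alpha>)}) d Q" for Q
    using Suc.IH[OF _ _ _ that] Suc.prems(1-3) by simp
  then have "real (card P) \<le> (1 + 1/\<beta>) * (1 + code_bound \<beta> n * (real d + 1))"
    using Suc.prems code_bound_nonneg[OF assms(1)]
    by (intro card_code_le_step[OF assms(1)]) auto
  also have "\<dots> \<le> (1 + 1/\<beta>) * ((1 + code_bound \<beta> n) * (real d + 1))"
    using assms(1) code_bound_nonneg[OF assms(1), of n] by (intro mult_left_mono) (auto simp: algebra_simps)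
  finally show ?case by (simp add: mult.assoc)
qed

theorem theorem1:
  fixes \<beta> :: real
  assumes "0 < \<beta>" and "\<beta> \<le> 1"
  shows "\<exists>c::real. \<forall>\<alpha>::real. \<forall>d::nat. \<forall>P.
           0 < \<alpha> \<and> \<alpha> < 1 \<and> d \<ge> 1 \<and>
           spherical_code ({-1..-\<beta>} \<union> {\<alpha>}) d P
           \<longrightarrow> finite P \<and> real (card P) \<le> c * real d"
proof -
  define n where "n = nat \<lceil>2/\<beta>\<^sup>2\<rceil>"
  have n: "2/\<beta>\<^sup>2 \<le> real n" unfolding n_def by linarith
  have c: "0 \<le> code_bound \<beta> n" using assms(1) by (rule code_bound_nonneg)
  show ?thesis
  proof (intro exI[of _ "2 * code_bound \<beta> n"] allI impI)
    fix \<alpha> :: real and d :: nat and P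
    assume "0 < \<alpha> \<and> \<alpha> < 1 \<and> d \<ge> 1 \<and> spherical_code ({-1..-\<beta>} \<union> {\<alpha>}) d P"
    then have \<alpha>: "0 < \<alpha>" "\<alpha> < 1" and "d \<ge> 1"
      and code: "spherical_code ({..-\<beta>} \<union> {\<alpha>}) d P"
      by (auto elim: spherical_code_mono)
    have "2/\<beta>\<^sup>2 \<le> 1/\<alpha> + real n" using n \<alpha>(1) by (simp add: add_increasing)
    then have "real (card Q) \<le> code_bound \<beta> n * (real d + 1)" if "Q \<subseteq> P" "finite Q" for Q
      using card_code_le_code_bound[OF assms(1) \<alpha>] spherical_code_subset[OF code that(1)] that(2) by blast
    then have "finite P \<and> card P \<le> nat \<lfloor>code_bound \<beta> n * (real d + 1)\<rfloor>"
      by (intro finite_if_finite_subsets_card_bdd) (simp add: le_nat_floor)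
    moreover have "real (nat \<lfloor>code_bound \<beta> n * (real d + 1)\<rfloor>) \<le> code_bound \<beta> n * (real d + 1)"
      using c by (intro of_nat_floor) simp
    moreover have "code_bound \<beta> n * (real d + 1) \<le> 2 * code_bound \<beta> n * real d"
      using mult_left_mono[of 1 "real d", OF _ c] \<open>d \<ge> 1\<close> by (simp add: algebra_simps)
    ultimately show "finite P \<and> real (card P) \<le> 2 * code_bound \<beta> n * real d"
      by (meson of_nat_le_iff order_trans)
  qed
qed

end
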